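(* For every $f\in\mathcal G$, the series $\sum_{n=1}^\infty f(nx)$ converges absolutely for almost every $x>0$, so $Pf(x)=\sum_{n=1}^\infty f(nx)-\frac1x\int_0^\infty f(t)\,dt$ is well defined a.e. on $(0,\infty)$, and $Pf$ is locally integrable on $(0,\infty)$.
   Context: A good kernel is a continuously differentiable function $f:[0,\infty)\to\mathbb C$ with $f(x)\to0$ as $x\to\infty$, $f\in L_1(0,\infty)$, and $\int_0^\infty t|f'(t)|\,dt<\infty$; $\mathcal G$ denotes the class of good kernels. *)

theory Defs
  imports "HOL-Analysis.Analysis"
begin

definition good_kernel :: "(real \<Rightarrow> complex) \<Rightarrow> bool" where
  "good_kernel f \<longleftrightarrow>
     (\<exists>f'. (\<forall>t\<ge>0. (f has_vector_derivative f' t) (at t within {0..}))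
          \<and> continuous_on {0..} f'
          \<and> set_integrable lborel {0<..} (\<lambda>t. t * norm (f' t)))
     \<and> (f \<longlongrightarrow> 0) at_top
     \<and> set_integrable lborel {0<..} f"

definition Pf :: "(real \<Rightarrow> complex) \<Rightarrow> real \<Rightarrow> complex" where
  "Pf f x = (\<Sum>n. f (real (Suc n) * x))
            - complex_of_real (1 / x) * (LINT t:{0<..}|lborel. f t)"

end

theory Submission imports Defs begin

text \<open>Only \<open>f \<in> L\<^sub>1(0,\<infinity>)\<close> is used. For \<open>0 < a \<le> b\<close>, Tonelli's theorem and the
  substitution \<open>t = n x\<close> give \<open>\<integral>\<^sub>a\<^sup>b \<Sum>\<^sub>n |f(n x)| dx = \<integral> |f(t)| w(t) dt\<close> with
  \<open>w(t) = \<Sum>{1/n | t/b \<le> n \<le> t/a}\<close>. The weight is at most \<open>2b/a\<close>: it has at most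
  \<open>t/a - t/b + 1\<close> terms, each at most \<open>b/t\<close>, and \<open>t \<ge> a\<close> whenever it is nonzero. Hence
  \<open>\<Sum>\<^sub>n |f(n x)|\<close> is locally integrable on \<open>(0,\<infinity>)\<close>, so finite almost everywhere, and \<open>Pf\<close>
  differs from \<open>\<Sum>\<^sub>n f(n x)\<close> by the continuous function \<open>x \<mapsto> x\<^sup>-\<^sup>1 \<integral> f\<close>.\<close>

lemma card_le_if_in_interval:
  fixes S :: "nat set"
  assumes "finite S" "S \<noteq> {}" "\<And>n. n \<in> S \<Longrightarrow> \<alpha> \<le> real n \<and> real n \<le> \<beta>"
  shows "real (card S) \<le> \<beta> - \<alpha> + 1"
proof -
  have "card S \<le> card {Min S..Max S}"
    using assms(1) by (intro card_mono) auto
  then have "real (card S) \<le> real (Suc (Max S) - Min S)" by simp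
  also have "\<dots> = real (Max S) + 1 - real (Min S)"
    using Min_le[OF assms(1) Max_in[OF assms(1,2)]] by (simp add: of_nat_diff)
  finally have "real (card S) \<le> real (Max S) + 1 - real (Min S)" .
  moreover have "\<alpha> \<le> real (Min S)" "real (Max S) \<le> \<beta>"
    using assms(3)[OF Min_in[OF assms(1,2)]] assms(3)[OF Max_in[OF assms(1,2)]] by auto
  ultimately show ?thesis by linarith
qed

lemma sum_inverse_multiples_in_interval_le:
  fixes a b t :: real
  assumes ab: "0 < a" "a \<le> b"
  defines "S \<equiv> {n::nat. real (Suc n) * a \<le> t \<and> t \<le> real (Suc n) * b}"
  shows "finite S" "(\<Sum>n\<in>S. 1 / real (Suc n)) \<le> 2 * b / a"
proof -
  have "S \<subseteq> {..nat \<lceil>t / a\<rceil>}"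
  proof
    fix n assume "n \<in> S"
    then have "real n \<le> t / a" using ab by (simp add: S_def field_simps)
    then show "n \<in> {..nat \<lceil>t / a\<rceil>}" by (simp add: le_nat_iff) linarith
  qed
  then show fin: "finite S" using finite_subset by blast
  show "(\<Sum>n\<in>S. 1 / real (Suc n)) \<le> 2 * b / a"
  proof (cases "S = {}")
    case True then show ?thesis using ab by simp
  next
    case False
    then obtain n0 where "real (Suc n0) * a \<le> t" by (auto simp: S_def)
    moreover have "a \<le> real (Suc n0) * a" using ab by simp
    ultimately have at: "a \<le> t" by linarith
    have card_S: "real (card S) \<le> (t / a - 1) - (t / b - 1) + 1"
    proof (rule card_le_if_in_interval[OF fin False])
      fix n assume "n \<in> S"
      then show "t / b - 1 \<le> real n \<and> real n \<le> t / a - 1"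
        using ab by (auto simp: S_def field_simps)
    qed
    have "(\<Sum>n\<in>S. 1 / real (Suc n)) \<le> (\<Sum>n\<in>S. b / t)"
      using ab at by (intro sum_mono) (auto simp: S_def field_simps)
    also have "\<dots> = real (card S) * (b / t)" by simp
    also have "\<dots> \<le> (t / a - t / b + 1) * (b / t)"
      using card_S ab at by (intro mult_right_mono) auto
    also have "\<dots> = b / a - 1 + b / t" using ab at by (simp add: field_simps)
    also have "\<dots> \<le> 2 * b / a"
      using frac_le[of b b a t] ab at by simp
    finally show ?thesis .
  qed
qed

lemma suminf_indicator_dilated_interval_le:
  fixes a b t :: real
  assumes "0 < a" "a \<le> b"
  shows "(\<Sum>n. ennreal (indicator {real (Suc n) * a..real (Suc n) * b} t / real (Suc n)))
           \<le> ennreal (2 * b / a)"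
proof -
  define S where "S = {n::nat. real (Suc n) * a \<le> t \<and> t \<le> real (Suc n) * b}"
  have "(\<Sum>n. ennreal (indicator {real (Suc n) * a..real (Suc n) * b} t / real (Suc n)))
      = (\<Sum>n\<in>S. ennreal (1 / real (Suc n)))"
    using sum_inverse_multiples_in_interval_le(1)[OF assms, of t]
    by (subst suminf_finite[where N = S]) (auto simp: S_def intro!: sum.cong)
  also have "\<dots> = ennreal (\<Sum>n\<in>S. 1 / real (Suc n))"
    by (simp add: sum_ennreal)
  also have "\<dots> \<le> ennreal (2 * b / a)"
    using sum_inverse_multiples_in_interval_le(2)[OF assms, of t] by (simp add: S_def ennreal_leI)
  finally show ?thesis .
qed

lemma nn_integral_dilate:
  fixes g :: "real \<Rightarrow> ennreal" and c :: real
  assumes [measurable]: "g \<in> borel_measurable borel" and "0 < c"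
  shows "(\<integral>\<^sup>+x. g (c * x) \<partial>lborel) = ennreal (1 / c) * (\<integral>\<^sup>+t. g t \<partial>lborel)"
proof -
  have "ennreal (1 / c) * ennreal c = 1"
    using \<open>0 < c\<close> by (simp flip: ennreal_mult)
  moreover have "(\<integral>\<^sup>+t. g t \<partial>lborel) = ennreal c * (\<integral>\<^sup>+x. g (c * x) \<partial>lborel)"
    using nn_integral_real_affine[of g c 0] \<open>0 < c\<close> by simp
  ultimately show ?thesis by (simp add: mult.assoc[symmetric])
qed

lemma nn_integral_interval_suminf_dilates_le:
  fixes g :: "real \<Rightarrow> ennreal" and a b :: real
  assumes [measurable]: "g \<in> borel_measurable borel" and ab: "0 < a" "a \<le> b"
  shows "(\<integral>\<^sup>+x. indicator {a..b} x * (\<Sum>n. g (real (Suc n) * x)) \<partial>lborel)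
           \<le> ennreal (2 * b / a) * (\<integral>\<^sup>+t. g t \<partial>lborel)"
proof -
  have dilate: "(\<integral>\<^sup>+x. indicator {a..b} x * g (real (Suc n) * x) \<partial>lborel)
      = (\<integral>\<^sup>+t. ennreal (indicator {real (Suc n) * a..real (Suc n) * b} t / real (Suc n)) * g t \<partial>lborel)"
    for n
  proof -
    define c where "c = real (Suc n)"
    have c: "0 < c" by (simp add: c_def)
    have "(\<integral>\<^sup>+x. indicator {a..b} x * g (c * x) \<partial>lborel)
        = (\<integral>\<^sup>+x. indicator {c * a..c * b} (c * x) * g (c * x) \<partial>lborel)"
      using c by (intro nn_integral_cong) (simp add: indicator_def)
    also have "\<dots> = ennreal (1 / c) * (\<integral>\<^sup>+t. indicator {c * a..c * b} t * g t \<partial>lborel)"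
      using c by (intro nn_integral_dilate) auto
    also have "\<dots> = (\<integral>\<^sup>+t. ennreal (1 / c) * (indicator {c * a..c * b} t * g t) \<partial>lborel)"
      by (rule nn_integral_cmult[symmetric]) auto
    also have "\<dots> = (\<integral>\<^sup>+t. ennreal (indicator {c * a..c * b} t / c) * g t \<partial>lborel)"
      by (intro nn_integral_cong) (simp add: indicator_def)
    finally show ?thesis by (simp add: c_def)
  qed
  have "(\<integral>\<^sup>+x. indicator {a..b} x * (\<Sum>n. g (real (Suc n) * x)) \<partial>lborel)
      = (\<Sum>n. \<integral>\<^sup>+x. indicator {a..b} x * g (real (Suc n) * x) \<partial>lborel)"
    unfolding ennreal_suminf_cmult[symmetric] by (rule nn_integral_suminf) measurable
  also have "\<dots> = (\<Sum>n. \<integral>\<^sup>+t. ennreal (indicator {real (Suc n) * a..real (Suc n) * b} t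
                                       / real (Suc n)) * g t \<partial>lborel)"
    by (simp only: dilate)
  also have "\<dots> = (\<integral>\<^sup>+t. (\<Sum>n. ennreal (indicator {real (Suc n) * a..real (Suc n) * b} t
                                       / real (Suc n))) * g t \<partial>lborel)"
    unfolding ennreal_suminf_multc[symmetric] by (rule nn_integral_suminf[symmetric]) measurable
  also have "\<dots> \<le> (\<integral>\<^sup>+t. ennreal (2 * b / a) * g t \<partial>lborel)"
    by (rule nn_integral_mono, rule mult_right_mono[OF suminf_indicator_dilated_interval_le[OF ab]]) simp
  also have "\<dots> = ennreal (2 * b / a) * (\<integral>\<^sup>+t. g t \<partial>lborel)"
    by (rule nn_integral_cmult) simp
  finally show ?thesis .
qed

lemma AE_suminf_dilates_finite:
  fixes g :: "real \<Rightarrow> ennreal"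
  assumes [measurable]: "g \<in> borel_measurable borel" and "(\<integral>\<^sup>+t. g t \<partial>lborel) < \<infinity>"
  shows "AE x in lborel. 0 < x \<longrightarrow> (\<Sum>n. g (real (Suc n) * x)) < \<infinity>"
proof -
  have finite_on_interval:
    "AE x in lborel. x \<in> {1 / real (Suc k)..real (Suc k)} \<longrightarrow> (\<Sum>n. g (real (Suc n) * x)) < \<infinity>"
    for k
  proof -
    have "(\<integral>\<^sup>+x. indicator {1 / real (Suc k)..real (Suc k)} x * (\<Sum>n. g (real (Suc n) * x)) \<partial>lborel)
        \<le> ennreal (2 * real (Suc k) / (1 / real (Suc k))) * (\<integral>\<^sup>+t. g t \<partial>lborel)"
      by (rule nn_integral_interval_suminf_dilates_le) (auto simp: field_simps)
    also have "\<dots> < \<infinity>"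
      using assms(2) by (simp add: ennreal_mult_less_top)
    finally have "AE x in lborel. indicator {1 / real (Suc k)..real (Suc k)} x
                                   * (\<Sum>n. g (real (Suc n) * x)) \<noteq> \<infinity>"
      by (intro nn_integral_PInf_AE) auto
    then show ?thesis
      by eventually_elim (auto simp: indicator_def top.not_eq_extremum)
  qed
  then have "AE x in lborel. \<forall>k. x \<in> {1 / real (Suc k)..real (Suc k)}
                                \<longrightarrow> (\<Sum>n. g (real (Suc n) * x)) < \<infinity>"
    using finite_on_interval by (simp only: AE_all_countable) blast
  then show ?thesis
  proof eventually_elim
    case (elim x)
    show ?case
    proof
      assume "0 < x"
      obtain k where "max x (1 / x) \<le> real k"
        using real_arch_simple by blast
      then have "x \<in> {1 / real (Suc k)..real (Suc k)}"
        using \<open>0 < x\<close> by (auto simp: field_simps)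
      then show "(\<Sum>n. g (real (Suc n) * x)) < \<infinity>" using elim by blast
    qed
  qed
qed

lemma set_integrable_obtain_extension:
  fixes f :: "'a \<Rightarrow> 'b::{banach, second_countable_topology}"
  assumes "set_integrable M A f"
  obtains h where "integrable M h" "\<And>t. t \<in> A \<Longrightarrow> h t = f t"
  using assms unfolding set_integrable_def by (intro that[of "\<lambda>t. indicator A t *\<^sub>R f t"]) auto

lemma summable_norm_dilates_AE:
  fixes f :: "real \<Rightarrow> 'a::{banach, second_countable_topology}"
  assumes "set_integrable lborel {0<..} f"
  shows "AE x in lborel. 0 < x \<longrightarrow> summable (\<lambda>n. norm (f (real (Suc n) * x)))"
proof -
  obtain h where h: "integrable lborel h" and hf: "\<And>t. 0 < t \<Longrightarrow> h t = f t"
    using set_integrable_obtain_extension[OF assms] by auto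
  have [measurable]: "h \<in> borel_measurable borel"
    using borel_measurable_integrable[OF h] by simp
  have "AE x in lborel. 0 < x \<longrightarrow> (\<Sum>n. ennreal (norm (h (real (Suc n) * x)))) < \<infinity>"
    using h by (intro AE_suminf_dilates_finite) (auto simp: integrable_iff_bounded)
  then show ?thesis
    by eventually_elim (auto intro: summable_suminf_not_top simp: hf mult_pos_pos)
qed

lemma ennreal_norm_suminf_le:
  fixes g :: "nat \<Rightarrow> 'a::banach"
  shows "ennreal (norm (suminf g)) \<le> (\<Sum>n. ennreal (norm (g n)))"
proof (cases "(\<Sum>n. ennreal (norm (g n))) = \<infinity>")
  case False
  then have "summable (\<lambda>n. norm (g n))"
    by (intro summable_suminf_not_top) auto
  moreover from this have "norm (suminf g) \<le> (\<Sum>n. norm (g n))"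
    by (rule summable_norm)
  ultimately show ?thesis
    by (simp add: suminf_ennreal2 ennreal_leI)
qed simp

lemma set_integrable_suminf_dilates:
  fixes f :: "real \<Rightarrow> 'a::{banach, second_countable_topology}"
  assumes "set_integrable lborel {0<..} f" and K: "compact K" "K \<subseteq> {0<..}"
  shows "set_integrable lborel K (\<lambda>x. \<Sum>n. f (real (Suc n) * x))"
proof (cases "K = {}")
  case False
  obtain h where h: "integrable lborel h" and hf: "\<And>t. 0 < t \<Longrightarrow> h t = f t"
    using set_integrable_obtain_extension[OF assms(1)] by auto
  obtain a b where "a \<in> K" "b \<in> K" and Kab: "K \<subseteq> {a..b}"
    using compact_attains_inf[OF K(1) False] compact_attains_sup[OF K(1) False]
    by (metis atLeastAtMost_iff subsetI)
  then have ab: "0 < a" "a \<le> b" using K(2) by auto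
  have [measurable]: "h \<in> borel_measurable borel"
    using borel_measurable_integrable[OF h] by simp
  have [measurable]: "K \<in> sets borel"
    using K(1) by (rule borel_compact)
  have "ennreal (norm (indicator K x *\<^sub>R (\<Sum>n. h (real (Suc n) * x))))
      \<le> indicator {a..b} x * (\<Sum>n. ennreal (norm (h (real (Suc n) * x))))" for x
  proof (cases "x \<in> K")
    case True
    then show ?thesis
      using subsetD[OF Kab True] by (simp add: ennreal_norm_suminf_le)
  qed simp
  then have "(\<integral>\<^sup>+x. ennreal (norm (indicator K x *\<^sub>R (\<Sum>n. h (real (Suc n) * x)))) \<partial>lborel)
      \<le> (\<integral>\<^sup>+x. indicator {a..b} x * (\<Sum>n. ennreal (norm (h (real (Suc n) * x)))) \<partial>lborel)"
    by (rule nn_integral_mono)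
  also have "\<dots> \<le> ennreal (2 * b / a) * (\<integral>\<^sup>+t. ennreal (norm (h t)) \<partial>lborel)"
    by (rule nn_integral_interval_suminf_dilates_le[OF _ ab]) measurable
  also have "\<dots> < \<infinity>"
    using h by (simp add: integrable_iff_bounded ennreal_mult_less_top)
  finally have "set_integrable lborel K (\<lambda>x. \<Sum>n. h (real (Suc n) * x))"
    unfolding set_integrable_def by (rule integrableI_bounded[rotated]) measurable
  moreover have "set_integrable lborel K (\<lambda>x. \<Sum>n. h (real (Suc n) * x))
      \<longleftrightarrow> set_integrable lborel K (\<lambda>x. \<Sum>n. f (real (Suc n) * x))"
    using K(2) by (intro set_integrable_cong) (auto simp: hf mult_pos_pos)
  ultimately show ?thesis by blast
qed simp

theorem mainTheorem6:
  fixes f :: "real \<Rightarrow> complex"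
  assumes "good_kernel f"
  shows "(AE x in lborel. x > 0 \<longrightarrow> summable (\<lambda>n. norm (f (real (Suc n) * x))))
         \<and> (\<forall>K. compact K \<and> K \<subseteq> {0<..} \<longrightarrow> set_integrable lborel K (Pf f))"
proof -
  have f: "set_integrable lborel {0<..} f"
    using assms by (simp add: good_kernel_def)
  have "set_integrable lborel K (Pf f)" if K: "compact K" "K \<subseteq> {0<..}" for K
  proof -
    have "continuous_on K (\<lambda>x. complex_of_real (1 / x) * (LINT t:{0<..}|lborel. f t))"
      using K(2) by (intro continuous_intros) auto
    then have "set_integrable lborel K (\<lambda>x. complex_of_real (1 / x) * (LINT t:{0<..}|lborel. f t))"
      unfolding set_integrable_def by (rule borel_integrable_compact[OF K(1)])
    with set_integrable_suminf_dilates[OF f K] show ?thesis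
      unfolding Pf_def by (rule set_integral_diff)
  qed
  with summable_norm_dilates_AE[OF f] show ?thesis by blast
qed

end
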